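(* Assume the Setting below with $q<n\le2p$. Fix an integer $N\in[2p,4p]$. Then for every $\xi_*\in(0,E_0)$ such that $\Lambda_n(\xi_* )\neq0$ and $\Lambda_n'(\xi_* )<0$ there exists a solution $v_*(t)$ of $du/dt=\sum_{k=n}^Nt^{-k/q}\Lambda_k(u)$, defined for all large $t$, with $v_*(t)=\xi_*+O(t^{-1/q})$ as $t\to\infty$.
   Context: Setting: for the Itô system $d{\bf z}={\bf a}({\bf z},t)dt+{\bf A}({\bf z},t)d{\bf w}$ in $\mathbb R^2$ (${\bf w}$ a 2D Wiener process) with deterministic smooth coefficients, ${\bf a}(0,t)\equiv0$, asymptotic expansions ${\bf a}\sim{\bf a}_0+\sum_{k\ge1}t^{-k/q}{\bf a}_k$, ${\bf A}\sim\sum_{k\ge1}t^{-k/q}{\bf A}_k$ ($q\in\mathbb Z_+$) uniformly near the origin, ${\bf a}_0=(\partial_yH_0,-\partial_xH_0)^T$ with $H_0=|{\bf z}|^2/2+O(|{\bf z}|^3)$ whose level sets $\{H_0=E\}$, $E\in(0,E_0]$, near the origin are closed curves carrying periodic solutions $(x_*,y_* )(t,E)$ (normalized $x_*(0,E)>0$, $y_*(0,E)=0$) of frequency $\nu(E)=1+O(E)$, $\nu\neq0$; $p\in\mathbb Z_+$ minimal with ${\bf A}_p(0)\neq0$. With energy–angle variables $x=X(\varphi,E)=x_*(\varphi/\nu(E),E)$, $y=Y(\varphi,E)=y_*(\varphi/\nu(E),E)$, inverse $E=I(x,y)$, $\varphi=\Phi(x,y)$, and generator $LU=\partial_tU+(\nabla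 U)^T{\bf a}+\frac12\mathrm{tr}({\bf A}^T{\bf H}(U){\bf A})$, the averaged coefficients $\Lambda_k(E)$ and $v_k(E,\varphi)$ ($2\pi$-periodic, zero $\varphi$-mean), $k\ge1$, are uniquely determined order by order by $L[V_N(I,\Phi,t)]=\sum_{k=1}^Nt^{-k/q}\Lambda_k(V_N)+O(t^{-(N+1)/q})$ for every $N$, where $V_N=E+\sum_{k=1}^Nt^{-k/q}v_k(E,\varphi)$. $n\le2p$ is the smallest index with $\Lambda_k\equiv0$ for $k<n$, $\Lambda_n\not\equiv0$. *)

theory Defs
  imports "HOL-Analysis.Analysis" "HOL-Library.Landau_Symbols"
begin

definition smooth_on :: "real set \<Rightarrow> (real \<Rightarrow> real) \<Rightarrow> bool" where
  "smooth_on S f \<longleftrightarrow> (\<forall>m. ((deriv ^^ m) f) differentiable_on S)"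

end

theory Submission
  imports Defs
begin

text \<open>The substitution \<open>\<tau> = t powr (-1/q)\<close> turns the equation into
  \<open>du/d\<tau> = -q \<Sum>k. \<tau>^(k-q-1) \<Lambda> k u\<close>. Since every \<open>k\<close> exceeds \<open>q\<close>, the new
  right-hand side is polynomial in \<open>\<tau>\<close> and Lipschitz in \<open>u\<close> near \<open>\<xi>\<close>, so Picard
  iteration gives a solution on some \<open>[0, h]\<close> with \<open>u 0 = \<xi>\<close> and \<open>|u \<tau> - \<xi>| \<le> M \<tau>\<close>.
  Going back to \<open>t = \<tau> powr -q\<close> yields a solution for \<open>t > h powr -q\<close> with
  \<open>v t - \<xi> = O(t powr (-1/q))\<close>.\<close>

lemma lipschitz_on_sum:
  fixes f :: "'k \<Rightarrow> 'a::metric_space \<Rightarrow> 'b::real_normed_vector"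
  assumes "finite K" "\<And>k. k \<in> K \<Longrightarrow> (L k)-lipschitz_on U (f k)"
  shows "(\<Sum>k\<in>K. L k)-lipschitz_on U (\<lambda>x. \<Sum>k\<in>K. f k x)"
  using assms by (induction K rule: finite_induct) (auto intro: lipschitz_on_add lipschitz_on_constant)

lemma lipschitz_on_clamp_compose:
  fixes f :: "'a::euclidean_space \<Rightarrow> 'b::metric_space"
  assumes f: "L-lipschitz_on (cbox a b) f"
  shows "L-lipschitz_on UNIV (\<lambda>x. f (clamp a b x))"
proof (cases "\<forall>i\<in>Basis. a \<bullet> i \<le> b \<bullet> i")
  case True
  have "1-lipschitz_on UNIV (clamp a b)"
    by (rule lipschitz_onI) (simp_all add: dist_clamps_le_dist_args)
  moreover have "L-lipschitz_on (range (clamp a b)) f"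
    using True by (auto intro: lipschitz_on_subset[OF f])
  ultimately show ?thesis
    using lipschitz_on_compose2[of 1 UNIV "clamp a b" L f] by simp
next
  case False
  then have "clamp a b = (\<lambda>_. a)"
    by (meson clamp_empty_interval not_le)
  then show ?thesis
    using lipschitz_on_nonneg[OF f] by (simp add: lipschitz_on_def)
qed

lemma norm_integral_clamp_le:
  fixes F :: "real \<Rightarrow> real"
  assumes F: "continuous_on UNIV F" and bnd: "\<And>s. \<bar>F s\<bar> \<le> M" and "h \<ge> 0"
  shows "\<bar>integral {0..clamp 0 h \<tau>} F\<bar> \<le> M * h"
proof -
  have \<tau>: "clamp 0 h \<tau> \<in> {0..h}"
    using clamp_in_interval[of 0 h \<tau>] \<open>h \<ge> 0\<close> by simp
  have "norm (integral {0..clamp 0 h \<tau>} F) \<le> M * (clamp 0 h \<tau> - 0)"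
    by (rule integral_bound) (use \<tau> bnd in \<open>auto intro: continuous_on_subset[OF F]\<close>)
  also have "\<dots> \<le> M * h"
    using \<tau> bnd[of 0] by (auto intro: mult_left_mono)
  finally show ?thesis by simp
qed

lemma continuous_on_integral_clamp:
  fixes F :: "real \<Rightarrow> real"
  assumes F: "continuous_on UNIV F"
  shows "continuous_on UNIV (\<lambda>\<tau>. integral {0..clamp 0 h \<tau>} F)"
proof (rule clamp_continuous_on)
  show "continuous_on (cbox 0 h) (\<lambda>x. integral {0..x} F)"
    using indefinite_integral_continuous_1[OF integrable_continuous_real[OF continuous_on_subset[OF F]]]
    by auto
qed

lemma continuous_on_compose_graph:
  fixes G :: "real \<Rightarrow> real \<Rightarrow> real"
  assumes G: "continuous_on UNIV (\<lambda>p. G (fst p) (snd p))" and f: "continuous_on UNIV f"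
  shows "continuous_on UNIV (\<lambda>s. G s (f s))"
proof -
  have "continuous_on UNIV (\<lambda>s. (s, f s))"
    using f by (intro continuous_intros) auto
  from continuous_on_compose2[OF G this] show ?thesis
    by simp
qed

text \<open>Clamping \<open>\<tau>\<close> to \<open>[0, h]\<close> lets the Picard map act on bounded continuous functions on
  the whole line, where the contraction principle \<open>banach_fix_type\<close> applies.\<close>

definition picard_operator ::
    "(real \<Rightarrow> real \<Rightarrow> real) \<Rightarrow> real \<Rightarrow> real \<Rightarrow> (real \<Rightarrow>\<^sub>C real) \<Rightarrow> real \<Rightarrow> real" where
  "picard_operator G \<xi> h f \<tau> = \<xi> + integral {0..clamp 0 h \<tau>} (\<lambda>s. G s (f s))"

context
  fixes G :: "real \<Rightarrow> real \<Rightarrow> real" and M L h \<xi> :: real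
  assumes contG: "continuous_on UNIV (\<lambda>p. G (fst p) (snd p))"
    and bnd: "\<And>s u. \<bar>G s u\<bar> \<le> M"
    and lip: "\<And>s. L-lipschitz_on UNIV (G s)"
    and "h \<ge> 0"
begin

private lemma continuous_on_field_along: "continuous_on UNIV (\<lambda>s. G s (f s))"
  for f :: "real \<Rightarrow>\<^sub>C real"
  using continuous_on_compose_graph[OF contG] by simp

lemma picard_operator_bcontfun: "picard_operator G \<xi> h f \<in> bcontfun"
proof -
  have "continuous_on UNIV (picard_operator G \<xi> h f)"
    unfolding picard_operator_def[abs_def]
    by (intro continuous_intros continuous_on_integral_clamp continuous_on_field_along)
  moreover have "\<bar>picard_operator G \<xi> h f \<tau>\<bar> \<le> \<bar>\<xi>\<bar> + M * h" for \<tau>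
    using norm_integral_clamp_le[OF continuous_on_field_along[of f] bnd \<open>h \<ge> 0\<close>, of \<tau>]
    by (simp add: picard_operator_def)
  ultimately show ?thesis
    by (auto simp: bcontfun_def intro!: boundedI)
qed

lemma dist_picard_operator_le:
  "dist (Bcontfun (picard_operator G \<xi> h f)) (Bcontfun (picard_operator G \<xi> h g)) \<le> (h * L) * dist f g"
proof (rule dist_bound)
  fix \<tau>
  have "\<bar>G s (f s) - G s (g s)\<bar> \<le> L * dist f g" for s
    using lipschitz_onD[OF lip, of "f s" "g s"] dist_bounded[of f s g] lipschitz_on_nonneg[OF lip]
    by (auto simp: dist_real_def intro: order_trans[OF _ mult_left_mono])
  then have "\<bar>integral {0..clamp 0 h \<tau>} (\<lambda>s. G s (f s) - G s (g s))\<bar> \<le> L * dist f g * h"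
    by (intro norm_integral_clamp_le \<open>h \<ge> 0\<close> continuous_intros continuous_on_field_along) auto
  moreover have "integral {0..clamp 0 h \<tau>} (\<lambda>s. G s (f s) - G s (g s))
      = picard_operator G \<xi> h f \<tau> - picard_operator G \<xi> h g \<tau>"
    unfolding picard_operator_def
    by (subst integral_diff)
       (auto intro!: integrable_continuous_real continuous_on_subset[OF continuous_on_field_along])
  ultimately show "dist (Bcontfun (picard_operator G \<xi> h f) \<tau>) (Bcontfun (picard_operator G \<xi> h g) \<tau>)
      \<le> (h * L) * dist f g"
    by (simp add: Bcontfun_inverse[OF picard_operator_bcontfun] dist_real_def algebra_simps)
qed

lemma integral_equation_fixed_point:
  assumes "h * L < 1"
  shows "\<exists>\<phi>. continuous_on UNIV \<phi> \<and>
           (\<forall>\<tau>\<in>{0..h}. \<phi> \<tau> = \<xi> + integral {0..\<tau>} (\<lambda>s. G s (\<phi> s)))"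
proof -
  have "0 \<le> h * L"
    using \<open>h \<ge> 0\<close> lipschitz_on_nonneg[OF lip] by simp
  then obtain f where f: "Bcontfun (picard_operator G \<xi> h f) = f"
    using banach_fix_type[of "h * L" "\<lambda>f. Bcontfun (picard_operator G \<xi> h f)"]
          dist_picard_operator_le assms by blast
  have "f \<tau> = \<xi> + integral {0..\<tau>} (\<lambda>s. G s (f s))" if "\<tau> \<in> {0..h}" for \<tau>
  proof -
    have "f \<tau> = picard_operator G \<xi> h f \<tau>"
      by (metis Bcontfun_inverse[OF picard_operator_bcontfun] f)
    moreover have "clamp 0 h \<tau> = \<tau>"
      using that by simp
    ultimately show ?thesis
      by (simp add: picard_operator_def)
  qed
  then show ?thesis
    by (intro exI[of _ "apply_bcontfun f"]) auto
qed

end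

lemma bounded_lipschitz_ode_local_solution:
  fixes G :: "real \<Rightarrow> real \<Rightarrow> real"
  assumes contG: "continuous_on UNIV (\<lambda>p. G (fst p) (snd p))"
    and bnd: "\<And>s u. \<bar>G s u\<bar> \<le> M"
    and lip: "\<And>s. L-lipschitz_on UNIV (G s)"
    and "h0 > 0"
  shows "\<exists>h \<phi>. 0 < h \<and> h \<le> h0 \<and>
           (\<forall>\<tau>\<in>{0<..<h}. (\<phi> has_real_derivative G \<tau> (\<phi> \<tau>)) (at \<tau>)) \<and>
           (\<forall>\<tau>\<in>{0..h}. \<bar>\<phi> \<tau> - \<xi>\<bar> \<le> M * \<tau>)"
proof -
  define h where "h = min h0 (1 / (L + 1))"
  have L: "L \<ge> 0"
    using lipschitz_on_nonneg[OF lip] .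
  have h: "0 < h" "h \<le> h0"
    using \<open>h0 > 0\<close> L by (auto simp: h_def)
  have "h * L \<le> L / (L + 1)"
    using L mult_right_mono[of h "1 / (L + 1)" L] by (simp add: h_def)
  also have "\<dots> < 1"
    using L by simp
  finally obtain \<phi> where cont: "continuous_on UNIV \<phi>"
    and \<phi>: "\<And>\<tau>. \<tau> \<in> {0..h} \<Longrightarrow> \<phi> \<tau> = \<xi> + integral {0..\<tau>} (\<lambda>s. G s (\<phi> s))"
    using integral_equation_fixed_point[OF contG bnd lip, of h \<xi>] h by auto
  define F where "F s = G s (\<phi> s)" for s
  have F: "continuous_on UNIV F"
    unfolding F_def[abs_def] by (rule continuous_on_compose_graph[OF contG cont])
  have "(\<phi> has_real_derivative F \<tau>) (at \<tau>)" if \<tau>: "\<tau> \<in> {0<..<h}" for \<tau>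
  proof -
    have "((\<lambda>x. integral {0..x} F) has_real_derivative F \<tau>) (at \<tau> within {0..h})"
      by (rule integral_has_real_derivative) (use \<tau> in \<open>auto intro: continuous_on_subset[OF F]\<close>)
    then have "((\<lambda>x. \<xi> + integral {0..x} F) has_real_derivative F \<tau>) (at \<tau>)"
      using \<tau> by (auto simp: at_within_Icc_at intro: derivative_eq_intros)
    then show ?thesis
      by (rule has_field_derivative_transform_within_open[of _ _ _ "{0<..<h}"])
         (use \<tau> \<phi> in \<open>auto simp: F_def[abs_def]\<close>)
  qed
  moreover have "\<bar>\<phi> \<tau> - \<xi>\<bar> \<le> M * \<tau>" if "\<tau> \<in> {0..h}" for \<tau>
  proof -
    have "norm (integral {0..\<tau>} F) \<le> M * (\<tau> - 0)"
      by (rule integral_bound) (use that bnd continuous_on_subset[OF F] in \<open>auto simp: F_def\<close>)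
    then show ?thesis
      using \<phi>[OF that] by (simp add: F_def[abs_def])
  qed
  ultimately show ?thesis
    using h unfolding F_def by blast
qed

lemma clamped_polynomial_field:
  fixes g :: "'k \<Rightarrow> real \<Rightarrow> real" and e :: "'k \<Rightarrow> nat" and a b :: real
  assumes K: "finite K" and "a \<le> b" and L: "\<And>k. k \<in> K \<Longrightarrow> (L k)-lipschitz_on {a..b} (g k)"
  defines "G \<equiv> \<lambda>s u. \<Sum>k\<in>K. clamp 0 1 s ^ e k * g k (clamp a b u)"
  shows "continuous_on UNIV (\<lambda>p. G (fst p) (snd p))"
    and "\<exists>M. \<forall>s u. \<bar>G s u\<bar> \<le> M"
    and "(\<Sum>k\<in>K. L k)-lipschitz_on UNIV (G s)"
proof -
  have weight: "\<bar>clamp 0 1 s ^ m\<bar> \<le> 1" for s :: real and m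
    using clamp_in_interval[of 0 1 s] by (simp add: power_le_one)
  have gclamp: "(L k)-lipschitz_on UNIV (\<lambda>u. g k (clamp a b u))" if "k \<in> K" for k
    using lipschitz_on_clamp_compose[of "L k" a b "g k"] L[OF that] by simp
  have "continuous_on UNIV (\<lambda>s::real. clamp 0 1 s ^ m)" for m
    by (rule clamp_continuous_on) (intro continuous_intros)
  then have "continuous_on UNIV (\<lambda>p::real \<times> real. clamp 0 1 (fst p) ^ m)" for m
    by (rule continuous_on_compose2) (auto intro: continuous_intros)
  moreover have "continuous_on UNIV (\<lambda>p::real \<times> real. g k (clamp a b (snd p)))" if "k \<in> K" for k
    using lipschitz_on_continuous_on[OF gclamp[OF that]]
    by (rule continuous_on_compose2) (auto intro: continuous_intros)
  ultimately show "continuous_on UNIV (\<lambda>p. G (fst p) (snd p))"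
    unfolding G_def by (intro continuous_on_sum continuous_on_mult) auto
  have "\<exists>B. \<forall>x\<in>{a..b}. \<bar>g k x\<bar> \<le> B" if "k \<in> K" for k
    using compact_imp_bounded[OF compact_continuous_image[OF lipschitz_on_continuous_on[OF L[OF that]]]]
    by (auto simp: bounded_real)
  then obtain B where B: "\<And>k x. k \<in> K \<Longrightarrow> x \<in> {a..b} \<Longrightarrow> \<bar>g k x\<bar> \<le> B k"
    by metis
  have "\<bar>clamp 0 1 s ^ e k * g k (clamp a b u)\<bar> \<le> B k" if "k \<in> K" for k s u
  proof -
    have "\<bar>g k (clamp a b u)\<bar> \<le> B k"
      using B[OF that] clamp_in_interval[of a b u] \<open>a \<le> b\<close> by simp
    from mult_mono[OF weight this zero_le_one abs_ge_zero] show ?thesis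
      by (simp add: abs_mult)
  qed
  then have "\<bar>G s u\<bar> \<le> (\<Sum>k\<in>K. B k)" for s u
    unfolding G_def by (rule order_trans[OF sum_abs sum_mono])
  then show "\<exists>M. \<forall>s u. \<bar>G s u\<bar> \<le> M"
    by blast
  show "(\<Sum>k\<in>K. L k)-lipschitz_on UNIV (G s)"
    unfolding G_def
    using lipschitz_on_cmult_real_upper[OF gclamp weight, of _ s]
    by (intro lipschitz_on_sum K) auto
qed

lemma polynomial_ode_local_solution:
  fixes g :: "'k \<Rightarrow> real \<Rightarrow> real" and e :: "'k \<Rightarrow> nat"
  assumes K: "finite K" and "\<delta> > 0"
    and lip: "\<And>k. k \<in> K \<Longrightarrow> \<exists>L. L-lipschitz_on {\<xi>-\<delta>..\<xi>+\<delta>} (g k)"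
  shows "\<exists>h M \<phi>. 0 < h \<and> (\<forall>\<tau>\<in>{0<..<h}. \<bar>\<phi> \<tau> - \<xi>\<bar> \<le> M * \<tau> \<and> \<bar>\<phi> \<tau> - \<xi>\<bar> < \<delta> \<and>
           (\<phi> has_real_derivative (\<Sum>k\<in>K. \<tau> ^ e k * g k (\<phi> \<tau>))) (at \<tau>))"
proof -
  define a b where "a = \<xi> - \<delta>" and "b = \<xi> + \<delta>"
  obtain L where L: "\<And>k. k \<in> K \<Longrightarrow> (L k)-lipschitz_on {a..b} (g k)"
    using lip unfolding a_def b_def by metis
  \<comment> \<open>The clamps make the field globally bounded and Lipschitz; for small \<open>\<tau>\<close> the
     solution never leaves the region where they act as the identity.\<close>
  define G where "G s u = (\<Sum>k\<in>K. clamp 0 1 s ^ e k * g k (clamp a b u))" for s u :: real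
  have "a \<le> b"
    using \<open>\<delta> > 0\<close> by (simp add: a_def b_def)
  note field = clamped_polynomial_field[where g = g and L = L and e = e, OF K this L, folded G_def]
  obtain M where bndG: "\<And>s u. \<bar>G s u\<bar> \<le> M"
    using field(2) by blast
  then have M: "M \<ge> 0"
    by (rule order_trans[OF abs_ge_zero])
  then have "min 1 (\<delta> / (M + 1)) > 0"
    using \<open>\<delta> > 0\<close> by simp
  then obtain h \<phi> where h: "0 < h" "h \<le> min 1 (\<delta> / (M + 1))"
    and \<phi>': "\<And>\<tau>. \<tau> \<in> {0<..<h} \<Longrightarrow> (\<phi> has_real_derivative G \<tau> (\<phi> \<tau>)) (at \<tau>)"
    and \<phi>: "\<And>\<tau>. \<tau> \<in> {0..h} \<Longrightarrow> \<bar>\<phi> \<tau> - \<xi>\<bar> \<le> M * \<tau>"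
    using bounded_lipschitz_ode_local_solution[OF field(1) bndG field(3), of _ \<xi>] by blast
  have "\<bar>\<phi> \<tau> - \<xi>\<bar> < \<delta> \<and>
        (\<phi> has_real_derivative (\<Sum>k\<in>K. \<tau> ^ e k * g k (\<phi> \<tau>))) (at \<tau>)"
    if \<tau>: "\<tau> \<in> {0<..<h}" for \<tau>
  proof
    have "M * \<tau> \<le> M * (\<delta> / (M + 1))"
      using \<tau> h M by (intro mult_left_mono) auto
    also have "\<dots> < \<delta>"
      using M \<open>\<delta> > 0\<close> by (simp add: field_simps)
    finally show close: "\<bar>\<phi> \<tau> - \<xi>\<bar> < \<delta>"
      using \<phi>[of \<tau>] \<tau> by auto
    have "\<phi> \<tau> \<in> cbox a b"
      using close by (auto simp: a_def b_def)
    then have "clamp a b (\<phi> \<tau>) = \<phi> \<tau>"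
      by (rule clamp_cancel_cbox)
    moreover have "clamp 0 1 \<tau> = \<tau>"
      using \<tau> h by simp
    ultimately show "(\<phi> has_real_derivative (\<Sum>k\<in>K. \<tau> ^ e k * g k (\<phi> \<tau>))) (at \<tau>)"
      using \<phi>'[OF \<tau>] by (simp add: G_def)
  qed
  then show ?thesis
    using h \<phi> by (intro exI[of _ h] exI[of _ M] exI[of _ \<phi>]) auto
qed

lemma powr_inverse_root_in_interval:
  assumes "q > 0" "h > 0" "t > h powr (- real q)"
  shows "t > 0" and "t powr (-1 / real q) \<in> {0<..<h}"
proof -
  show "t > 0"
    using assms(3) powr_gt_zero[of h "- real q"] \<open>h > 0\<close> by linarith
  have "t powr (-1 / real q) < (h powr (- real q)) powr (-1 / real q)"
    using assms by (intro powr_less_mono2_neg) auto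
  also have "\<dots> = h"
    using assms by (simp add: powr_powr)
  finally show "t powr (-1 / real q) \<in> {0<..<h}"
    using \<open>t > 0\<close> by simp
qed

lemma powr_inverse_root_power_mult:
  assumes "q > 0" "q < k" "t > 0"
  shows "(t powr (-1 / real q)) ^ (k - q - 1) * t powr (-1 / real q - 1) = t powr (- real k / real q)"
proof -
  have "(t powr (-1 / real q)) ^ (k - q - 1) = t powr (real (k - q - 1) * (-1 / real q))"
    using \<open>t > 0\<close> by (simp add: powr_power)
  then have "(t powr (-1 / real q)) ^ (k - q - 1) * t powr (-1 / real q - 1)
        = t powr (real (k - q - 1) * (-1 / real q) + (-1 / real q - 1))"
    unfolding powr_add by simp
  also have "real (k - q - 1) * (-1 / real q) + (-1 / real q - 1) = - real k / real q"
    using assms by (simp add: of_nat_diff field_simps)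
  finally show ?thesis .
qed

lemma inverse_root_time_change:
  fixes \<phi> :: "real \<Rightarrow> real" and g :: "nat \<Rightarrow> real \<Rightarrow> real"
  assumes "q > 0" "t > 0" "\<And>k. k \<in> K \<Longrightarrow> q < k"
    and \<phi>: "(\<phi> has_real_derivative
              (\<Sum>k\<in>K. \<tau> ^ (k - q - 1) * (- real q * g k (\<phi> \<tau>)))) (at \<tau>)"
    and \<tau>: "\<tau> = t powr (-1 / real q)"
  shows "((\<lambda>t. \<phi> (t powr (-1 / real q))) has_real_derivative
           (\<Sum>k\<in>K. t powr (- real k / real q) * g k (\<phi> \<tau>))) (at t)"
proof -
  have "((\<lambda>t. t powr (-1 / real q)) has_real_derivative
          (-1 / real q) * t powr (-1 / real q - 1)) (at t)"
    using \<open>t > 0\<close> by (rule has_real_derivative_powr)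
  from DERIV_chain2[OF \<phi>[unfolded \<tau>] this]
  have "((\<lambda>t. \<phi> (t powr (-1 / real q))) has_real_derivative
          (\<Sum>k\<in>K. \<tau> ^ (k - q - 1) * (- real q * g k (\<phi> \<tau>))) *
          ((-1 / real q) * t powr (-1 / real q - 1))) (at t)"
    by (simp add: \<tau>)
  moreover have "(\<Sum>k\<in>K. \<tau> ^ (k - q - 1) * (- real q * g k (\<phi> \<tau>))) *
          ((-1 / real q) * t powr (-1 / real q - 1))
        = (\<Sum>k\<in>K. (\<tau> ^ (k - q - 1) * t powr (-1 / real q - 1)) * g k (\<phi> \<tau>))"
    unfolding sum_distrib_right by (rule sum.cong) (use \<open>q > 0\<close> in auto)
  ultimately have "((\<lambda>t. \<phi> (t powr (-1 / real q))) has_real_derivative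
          (\<Sum>k\<in>K. (\<tau> ^ (k - q - 1) * t powr (-1 / real q - 1)) * g k (\<phi> \<tau>))) (at t)"
    by simp
  then show ?thesis
    using powr_inverse_root_power_mult[OF \<open>q > 0\<close> assms(3) \<open>t > 0\<close>]
    by (simp add: \<tau> cong: sum.cong)
qed

lemma inverse_power_ode_solution_at_top:
  fixes \<Lambda> :: "nat \<Rightarrow> real \<Rightarrow> real" and q :: nat
  assumes q: "q > 0" and K: "finite K" "\<And>k. k \<in> K \<Longrightarrow> q < k" and \<delta>: "\<delta> > 0"
    and lip: "\<And>k. k \<in> K \<Longrightarrow> \<exists>L. L-lipschitz_on {\<xi>-\<delta>..\<xi>+\<delta>} (\<Lambda> k)"
  shows "\<exists>T v. (\<forall>t>T. \<bar>v t - \<xi>\<bar> < \<delta> \<and>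
              (v has_real_derivative (\<Sum>k\<in>K. t powr (- real k / real q) * \<Lambda> k (v t))) (at t))
            \<and> (\<lambda>t. v t - \<xi>) \<in> O[at_top](\<lambda>t. t powr (- 1 / real q))"
proof -
  have "\<exists>L. L-lipschitz_on {\<xi>-\<delta>..\<xi>+\<delta>} (\<lambda>u. - real q * \<Lambda> k u)" if "k \<in> K" for k
    using lip[OF that] lipschitz_on_cmult_real by blast
  then obtain h M \<phi> where "h > 0" and \<phi>: "\<And>\<tau>. \<tau> \<in> {0<..<h} \<Longrightarrow>
      \<bar>\<phi> \<tau> - \<xi>\<bar> \<le> M * \<tau> \<and> \<bar>\<phi> \<tau> - \<xi>\<bar> < \<delta> \<and>
      (\<phi> has_real_derivative (\<Sum>k\<in>K. \<tau> ^ (k - q - 1) * (- real q * \<Lambda> k (\<phi> \<tau>)))) (at \<tau>)"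
    using polynomial_ode_local_solution[where g = "\<lambda>k u. - real q * \<Lambda> k u" and e = "\<lambda>k. k - q - 1",
                                        OF K(1) \<delta>]
    by blast
  define v where "v = (\<lambda>t. \<phi> (t powr (-1 / real q)))"
  have "\<bar>v t - \<xi>\<bar> < \<delta> \<and>
        (v has_real_derivative (\<Sum>k\<in>K. t powr (- real k / real q) * \<Lambda> k (v t))) (at t)"
    if "t > h powr (- real q)" for t
  proof
    note t = powr_inverse_root_in_interval[OF q \<open>h > 0\<close> that]
    show "\<bar>v t - \<xi>\<bar> < \<delta>"
      using \<phi>[OF t(2)] by (simp add: v_def)
    show "(v has_real_derivative (\<Sum>k\<in>K. t powr (- real k / real q) * \<Lambda> k (v t))) (at t)"
      using inverse_root_time_change[where g = \<Lambda>, OF q t(1) K(2) conjunct2[OF conjunct2[OF \<phi>[OF t(2)]]] refl]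
      by (simp add: v_def)
  qed
  moreover have "(\<lambda>t. v t - \<xi>) \<in> O[at_top](\<lambda>t. t powr (- 1 / real q))"
  proof (rule bigoI)
    show "\<forall>\<^sub>F t in at_top. norm (v t - \<xi>) \<le> M * norm (t powr (- 1 / real q))"
      using eventually_gt_at_top[of "h powr (- real q)"]
    proof eventually_elim
      case (elim t)
      note t = powr_inverse_root_in_interval[OF q \<open>h > 0\<close> elim]
      show ?case
        using \<phi>[OF t(2)] t(2) by (simp add: v_def)
    qed
  qed
  ultimately show ?thesis
    by blast
qed

lemma smooth_on_lipschitz_on:
  fixes f :: "real \<Rightarrow> real"
  assumes f: "smooth_on S f" and "open S" and I: "compact I" "convex I" "I \<subseteq> S"
  shows "\<exists>L. L-lipschitz_on I f"
proof -
  have f': "f differentiable_on S" and f'': "deriv f differentiable_on S"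
    using f[unfolded smooth_on_def, rule_format, of 0] f[unfolded smooth_on_def, rule_format, of 1]
    by simp_all
  have "continuous_on I (deriv f)"
    using differentiable_imp_continuous_on[OF f''] continuous_on_subset I(3) by blast
  then obtain C where C: "\<And>x. x \<in> I \<Longrightarrow> \<bar>deriv f x\<bar> \<le> C"
    using compact_imp_bounded[OF compact_continuous_image[OF _ I(1)]]
    by (fastforce simp: bounded_real)
  have "(f has_field_derivative deriv f x) (at x within I)" if "x \<in> I" for x
  proof -
    have "f differentiable at x"
      using f' \<open>open S\<close> I(3) that by (auto simp: differentiable_on_eq_differentiable_at)
    then show ?thesis
      by (simp add: DERIV_deriv_iff_real_differentiable has_field_derivative_at_within)
  qed
  then have "\<bar>f x - f y\<bar> \<le> max C 0 * \<bar>x - y\<bar>" if "x \<in> I" "y \<in> I" for x y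
    using field_differentiable_bound[OF I(2), of f "deriv f" "max C 0" x y] C that by force
  then show ?thesis
    by (intro exI[of _ "max C 0"] lipschitz_onI) (auto simp: dist_real_def)
qed

text \<open>Only \<open>q < n\<close> and the smoothness of the \<open>\<Lambda> k\<close> near \<open>\<xi>\<close> are needed: the
  non-degeneracy and sign conditions on \<open>\<Lambda> n\<close>, the vanishing of the lower coefficients
  and the bounds relating \<open>n\<close>, \<open>N\<close> and \<open>p\<close> are not used.\<close>

theorem lemma4:
  fixes \<Lambda> :: "nat \<Rightarrow> real \<Rightarrow> real"
    and p q n N :: nat and E0 \<xi> :: real
  assumes "p > 0" and "q > 0" and "E0 > 0"
    and smooth: "\<And>k. k \<ge> 1 \<Longrightarrow> smooth_on {0<..<E0} (\<Lambda> k)"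
    and vanish: "\<And>k. 1 \<le> k \<Longrightarrow> k < n \<Longrightarrow> (\<forall>E\<in>{0<..<E0}. \<Lambda> k E = 0)"
    and nonzero: "\<exists>E\<in>{0<..<E0}. \<Lambda> n E \<noteq> 0"
    and "q < n" and "n \<le> 2 * p"
    and "2 * p \<le> N" and "N \<le> 4 * p"
    and "\<xi> \<in> {0<..<E0}"
    and "\<Lambda> n \<xi> \<noteq> 0"
    and "deriv (\<Lambda> n) \<xi> < 0"
  shows "\<exists>T v. (\<forall>t>T. v t \<in> {0<..<E0} \<and>
              (v has_real_derivative
                 (\<Sum>k=n..N. t powr (- real k / real q) * \<Lambda> k (v t))) (at t))
            \<and> (\<lambda>t. v t - \<xi>) \<in> O[at_top](\<lambda>t. t powr (- 1 / real q))"
proof -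
  define \<delta> where "\<delta> = min (\<xi> / 2) ((E0 - \<xi>) / 2)"
  have \<delta>: "\<delta> > 0"
    using \<open>\<xi> \<in> {0<..<E0}\<close> by (simp add: \<delta>_def)
  have "\<delta> \<le> \<xi> / 2" "\<delta> \<le> (E0 - \<xi>) / 2"
    unfolding \<delta>_def by (rule min.cobounded1, rule min.cobounded2)
  then have I: "{\<xi>-\<delta>..\<xi>+\<delta>} \<subseteq> {0<..<E0}"
    using \<open>\<xi> \<in> {0<..<E0}\<close> by auto
  have kq: "q < k" if "k \<in> {n..N}" for k
    using that \<open>q < n\<close> by simp
  have "\<exists>L. L-lipschitz_on {\<xi>-\<delta>..\<xi>+\<delta>} (\<Lambda> k)" if "k \<in> {n..N}" for k
    using kq[OF that] smooth_on_lipschitz_on[OF smooth open_greaterThanLessThan compact_Icc _ I]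
    by simp
  then obtain T v where v: "\<And>t. t > T \<Longrightarrow> \<bar>v t - \<xi>\<bar> < \<delta> \<and>
        (v has_real_derivative (\<Sum>k=n..N. t powr (- real k / real q) * \<Lambda> k (v t))) (at t)"
    and "(\<lambda>t. v t - \<xi>) \<in> O[at_top](\<lambda>t. t powr (- 1 / real q))"
    using inverse_power_ode_solution_at_top[OF \<open>q > 0\<close> finite_atLeastAtMost kq \<delta>] by blast
  moreover have "v t \<in> {0<..<E0}" if "t > T" for t
  proof -
    have "v t \<in> {\<xi>-\<delta>..\<xi>+\<delta>}"
      using v[OF that] by (simp add: abs_less_iff)
    then show ?thesis
      using I by blast
  qed
  ultimately show ?thesis
    by blast
qed

end
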